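(* Let $b$ be a positive integer relatively prime to $6$, let $a\in\{0,1,\dots,b-1\}$, and let $f$ be the multiplicative order of $3/2$ modulo $b$. Then for every positive integer $x$ relatively prime to $3$ there is an admissible vector $s\in\mathcal{E}(x)$ such that $v_s(x)\equiv a\pmod b$, $v_s(x)\not\equiv 0\pmod 3$, and $l(s)\le (b-1)f$.
   Context: Let $T_0^{-1}(x)=2x$ and $T_1^{-1}(x)=(2x-1)/3$, viewed as maps $\mathbb{Q}\to\mathbb{Q}$. For $s=(s_0,s_1,\dots,s_k)$ with $k\ge 0$ and all $s_i$ nonnegative integers, the length of $s$ is $l(s)=k$ and $v_s=T_0^{-s_0}\circ T_1^{-1}\circ T_0^{-s_1}\circ T_1^{-1}\circ\cdots\circ T_1^{-1}\circ T_0^{-s_k}$ (with $k$ occurrences of $T_1^{-1}$). The vector $s$ is admissible for a positive integer $x$ if $v_s(x)$ is a positive integer; $\mathcal{E}(x)$ denotes the set of vectors admissible for $x$. *)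

theory Defs
  imports "HOL-Number_Theory.Number_Theory"
begin

definition T0inv :: "rat \<Rightarrow> rat" where
  "T0inv x = 2 * x"

definition T1inv :: "rat \<Rightarrow> rat" where
  "T1inv x = (2 * x - 1) / 3"

text \<open>A vector s = (s_0,...,s_k) is a nonempty list of naturals.
  v_s = T0^{-s_0} o T1^{-1} o T0^{-s_1} o ... o T1^{-1} o T0^{-s_k}.\<close>
fun vs :: "nat list \<Rightarrow> rat \<Rightarrow> rat" where
  "vs [] x = x"
| "vs [s0] x = (T0inv ^^ s0) x"
| "vs (s0 # rest) x = (T0inv ^^ s0) (T1inv (vs rest x))"

text \<open>length l(s) = k = number of T1^{-1} occurrences\<close>
definition len :: "nat list \<Rightarrow> nat" where
  "len s = length s - 1"

definition admissible :: "nat \<Rightarrow> nat list set" where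
  "admissible x = {s. s \<noteq> [] \<and> (\<exists>n::nat. n > 0 \<and> vs s (of_nat x) = of_nat n)}"

definition ord_three_halves :: "nat \<Rightarrow> nat" where
  "ord_three_halves b = ord b (3 * modular_inverse b 2)"

end

theory Submission
  imports Defs
begin

(* Call a positive integer Y reachable in k steps if Y = v_s(x) for some vector s of
   length at most k.  Reachable values are closed under Y -> 2Y (for free) and under
   Y -> (2Y - 1)/3 (one step).  For b > 1 put T = totient b, so 4^T = 1 modulo b, and write
   4^T = 1 + 3^M d with d prime to 3 and 1 <= M <= T (lifting the exponent).  Multiplying a
   reachable value by a power of 4^T changes neither its residue modulo b nor modulo 3^M but moves
   it modulo 3^(M+1); this lets us steer reachable values modulo b and modulo 3^M simultaneously.

   The main
   construction (locale three_adic_steering) has two phases: in M steps some residue modulo b is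
   reached together with all 3-adic unit classes modulo 3^M, and in b - 1 further steps all
   residues are.  The total length M + b - 1 <= 2(b - 1) is at most (b - 1) f because the order f
   of 3/2 modulo b is at least 2. *)

lemma T0inv_pow: "(T0inv ^^ n) z = 2 ^ n * z"
  by (induction n) (simp_all add: T0inv_def)

lemma vs_Cons: "vs (h # t) y = 2 ^ h * (if t = [] then y else T1inv (vs t y))"
  by (cases t) (simp_all add: T0inv_pow)

definition reachable :: "nat \<Rightarrow> nat \<Rightarrow> int \<Rightarrow> bool" where
  "reachable x k Y \<longleftrightarrow> Y > 0 \<and> (\<exists>s. s \<noteq> [] \<and> len s \<le> k \<and> vs s (of_nat x) = of_int Y)"

lemma reachable_start: "x > 0 \<Longrightarrow> reachable x 0 (int x)"
  unfolding reachable_def by (intro conjI exI[of _ "[0]"]) (auto simp: len_def)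

lemma reachable_mono: "reachable x k Y \<Longrightarrow> k \<le> k' \<Longrightarrow> reachable x k' Y"
  unfolding reachable_def by fastforce

(* Doubling is free: increase the first exponent s_0. *)
lemma reachable_double: "reachable x k Y \<Longrightarrow> reachable x k (2 ^ j * Y)"
proof -
  assume "reachable x k Y"
  then obtain h t where Y: "Y > 0" "len (h # t) \<le> k" "vs (h # t) (of_nat x) = of_int Y"
    unfolding reachable_def by (metis list.exhaust)
  have "vs ((h + j) # t) (of_nat x) = of_int (2 ^ j * Y)"
    using Y(3) by (simp add: vs_Cons power_add)
  then show ?thesis
    unfolding reachable_def using Y by (intro conjI exI[of _ "(h + j) # t"]) (auto simp: len_def)
qed

(* If 3Y + 1 = 2X then Y = T1^{-1}(X): prepend a 0 to the vector, at the cost of one unit of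
   length. *)
lemma reachable_T1: "reachable x k X \<Longrightarrow> 3 * Y + 1 = 2 * X \<Longrightarrow> reachable x (Suc k) Y"
proof -
  assume "reachable x k X" and XY: "3 * Y + 1 = 2 * X"
  then obtain s where X: "X > 0" "s \<noteq> []" "len s \<le> k" "vs s (of_nat x) = of_int X"
    unfolding reachable_def by blast
  have "of_int (3 * Y + 1) = (of_int (2 * X) :: rat)"
    using XY by presburger
  then have "vs (0 # s) (of_nat x) = of_int Y"
    using X by (simp add: vs_Cons T1inv_def field_simps)
  moreover have "Y > 0" using X XY by linarith
  ultimately show ?thesis
    unfolding reachable_def using X by (intro conjI exI[of _ "0 # s"]) (auto simp: len_def)
qed

lemma admissible_of_reachable:
  assumes "reachable x k (int n)"
  shows "\<exists>s\<in>admissible x. vs s (of_nat x) = of_nat n \<and> len s \<le> k"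
  using assms unfolding reachable_def admissible_def by force

lemma T1_residue_exists:
  fixes m r :: int
  assumes "coprime m 3"
  shows "\<exists>r'. [3 * r' + 1 = 2 * r] (mod m)"
proof -
  obtain i where i: "[3 * i = 1] (mod m)"
    using assms cong_solve_coprime_int by (metis coprime_commute)
  have "[(2 * r - 1) * (3 * i) + 1 = (2 * r - 1) * 1 + 1] (mod m)"
    using cong_add[OF cong_scalar_left[OF i, of "2 * r - 1"] cong_refl[of 1]] .
  then have "[3 * ((2 * r - 1) * i) + 1 = 2 * r] (mod m)"
    by (simp add: ac_simps)
  then show ?thesis ..
qed

locale closed_residue_set =
  fixes m :: int and R :: "int \<Rightarrow> bool"
  assumes m_gt_1: "m > 1" and m_coprime_6: "coprime m 6"
    and R_cong: "\<And>r r'. R r \<Longrightarrow> [r = r'] (mod m) \<Longrightarrow> R r'"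
    and R_double: "\<And>r. R r \<Longrightarrow> R (2 * r)"
    and R_T1: "\<And>r r'. R r \<Longrightarrow> [3 * r' + 1 = 2 * r] (mod m) \<Longrightarrow> R r'"
begin

lemma coprime_2_m: "coprime 2 m" and coprime_3_m: "coprime 3 m"
  using m_coprime_6 coprime_mult_right_iff[of m 2 3] by (simp_all add: coprime_commute)

lemma unit_pow_totient: "coprime a m \<Longrightarrow> [a ^ totient (nat m) = 1] (mod m)"
  using residues.euler_theorem[of m a] m_gt_1 by (simp add: residues_def coprime_commute)

lemma totient_pos: "totient (nat m) > 0"
  using m_gt_1 by simp

lemma R_double_pow: "R r \<Longrightarrow> R (2 ^ n * r)"
  by (induction n) (simp_all add: mult.assoc R_double)

(* R is also closed under halving, since 2^totient = 1 modulo m. *)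
lemma R_halve:
  assumes "R r" and "[2 * r' = r] (mod m)"
  shows "R r'"
proof -
  define T where "T = totient (nat m)"
  have "[2 ^ (T - 1) * r = 2 ^ (T - 1) * (2 * r')] (mod m)"
    using assms(2) by (simp add: cong_scalar_left cong_sym)
  also have "2 ^ (T - 1) * (2 * r') = 2 ^ T * r'"
    using totient_pos unfolding T_def by (cases T) (simp_all add: T_def)
  also have "[2 ^ T * r' = 1 * r'] (mod m)"
    using unit_pow_totient[OF coprime_2_m] unfolding T_def by (rule cong_scalar_right)
  finally show ?thesis
    using R_cong[OF R_double_pow[OF assms(1)]] by simp
qed

lemma R_T1_iterate:
  assumes "R r"
  shows "\<exists>r1. R r1 \<and> [3 ^ j * (r1 + 1) = 2 ^ j * (r + 1)] (mod m)"
proof (induction j)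
  case 0
  show ?case using assms by auto
next
  case (Suc j)
  then obtain r1 where r1: "R r1" "[3 ^ j * (r1 + 1) = 2 ^ j * (r + 1)] (mod m)"
    by blast
  obtain r2 where r2: "[3 * r2 + 1 = 2 * r1] (mod m)"
    using T1_residue_exists coprime_3_m by (metis coprime_commute)
  have "[3 ^ Suc j * (r2 + 1) = 3 ^ j * (2 * (r1 + 1))] (mod m)"
    using cong_scalar_left[OF cong_add[OF r2 cong_refl[of 2]], of "3 ^ j"]
    by (simp add: algebra_simps)
  also have "[3 ^ j * (2 * (r1 + 1)) = 2 ^ Suc j * (r + 1)] (mod m)"
    using cong_scalar_left[OF r1(2), of 2] by (simp add: algebra_simps)
  finally show ?case
    using R_T1[OF r1(1) r2] by blast
qed

(* Taking totient - 1 iterations inverts the map: R is closed under r -> (3r + 1)/2. *)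
lemma R_T1_inverse:
  assumes "R r"
  shows "\<exists>r1. R r1 \<and> [2 * r1 = 3 * r + 1] (mod m)"
proof -
  define T where "T = totient (nat m)"
  obtain r1 where r1: "R r1" "[3 ^ (T - 1) * (r1 + 1) = 2 ^ (T - 1) * (r + 1)] (mod m)"
    using R_T1_iterate[OF assms] by blast
  have T_split: "(3::int) ^ T = 3 * 3 ^ (T - 1)" "(2::int) ^ T = 2 * 2 ^ (T - 1)"
    using totient_pos unfolding T_def by (cases "totient (nat m)"; simp)+
  have "[3 ^ T * (2 * (r1 + 1)) = 1 * (2 * (r1 + 1))] (mod m)"
    using unit_pow_totient[OF coprime_3_m] unfolding T_def by (rule cong_scalar_right)
  then have "[2 * (r1 + 1) = 3 ^ T * (2 * (r1 + 1))] (mod m)"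
    by (metis cong_sym mult_1)
  also have "3 ^ T * (2 * (r1 + 1)) = 6 * (3 ^ (T - 1) * (r1 + 1))"
    by (simp add: T_split)
  also have "[\<dots> = 6 * (2 ^ (T - 1) * (r + 1))] (mod m)"
    using r1(2) by (rule cong_scalar_left)
  also have "6 * (2 ^ (T - 1) * (r + 1)) = 2 ^ T * (3 * (r + 1))"
    by (simp add: T_split)
  also have "[\<dots> = 1 * (3 * (r + 1))] (mod m)"
    using unit_pow_totient[OF coprime_2_m] unfolding T_def by (rule cong_scalar_right)
  finally have "[2 * r1 + 2 = (3 * r + 1) + 2] (mod m)"
    by (simp add: algebra_simps)
  then have "[2 * r1 = 3 * r + 1] (mod m)"
    by (simp only: cong_add_rcancel)
  then show ?thesis
    using r1(1) by blast
qed

lemma R_shift: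
  assumes "R r" and c: "[6 * c = 1] (mod m)"
  shows "R (r + c)"
proof -
  obtain r1 where r1: "R r1" "[2 * r1 = 3 * r + 1] (mod m)"
    using R_T1_inverse[OF assms(1)] by blast
  have "R (3 * r + 1)"
    using R_cong[OF R_double[OF r1(1)] r1(2)] .
  moreover have "[3 * (2 * (r + c)) + 1 = 2 * (3 * r + 1)] (mod m)"
    using cong_add[OF cong_refl[of "6 * r + 1"] c] by (simp add: algebra_simps)
  ultimately have "R (2 * (r + c))"
    by (rule R_T1)
  then show ?thesis
    by (rule R_halve) simp
qed

(* Repeated translation by 1/6 reaches every residue. *)
theorem R_everything:
  assumes "R r0"
  shows "R a"
proof -
  obtain c where c: "[6 * c = 1] (mod m)"
    using cong_solve_coprime_int m_coprime_6 by (metis coprime_commute)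
  have shifted: "R (r0 + int n * c)" for n
  proof (induction n)
    case (Suc n)
    then show ?case
      using R_shift[OF Suc c] by (simp add: algebra_simps)
  qed (simp add: assms)
  define n where "n = nat ((6 * (a - r0)) mod m)"
  have "[int n = 6 * (a - r0)] (mod m)"
    unfolding n_def using m_gt_1 by (simp add: cong_def)
  then have "[r0 + int n * c = r0 + 6 * (a - r0) * c] (mod m)"
    by (intro cong_add cong_refl cong_scalar_right)
  also have "r0 + 6 * (a - r0) * c = r0 + (a - r0) * (6 * c)"
    by (simp add: ac_simps)
  also have "[r0 + (a - r0) * (6 * c) = r0 + (a - r0) * 1] (mod m)"
    using c by (intro cong_add cong_refl cong_scalar_left)
  finally show ?thesis
    using R_cong[OF shifted] by simp
qed

end

lemma saturation:
  fixes R :: "nat \<Rightarrow> int \<Rightarrow> bool" and m :: int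
  assumes "m > 0"
    and cong: "\<And>k r r'. R k r \<Longrightarrow> [r = r'] (mod m) \<Longrightarrow> R k r'"
    and mono: "\<And>k r. R k r \<Longrightarrow> R (Suc k) r"
    and grow: "\<And>k r. R k r \<Longrightarrow> (\<forall>a. R k a) \<or> (\<exists>r'. R (Suc k) r' \<and> \<not> R k r')"
    and start: "R k0 r0"
  shows "R (k0 + nat m - 1) a"
proof -
  define S where "S k = {r \<in> {0..<m}. R k r}" for k
  have S_fin: "finite (S k)" for k
    unfolding S_def by (rule finite_subset[of _ "{0..<m}"]) auto
  have R_iff: "R k r \<longleftrightarrow> r mod m \<in> S k" for k r
    unfolding S_def using \<open>m > 0\<close> cong[of k r "r mod m"] cong[of k "r mod m" r]
    by (auto simp: cong_def)
  have count: "(\<forall>a. R (k0 + j) a) \<or> j < card (S (k0 + j))" for j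
  proof (induction j)
    case 0
    have "S k0 \<noteq> {}"
      using start R_iff by blast
    then show ?case
      using S_fin by (simp add: card_gt_0_iff)
  next
    case (Suc j)
    show ?case
    proof (cases "\<forall>a. R (k0 + j) a")
      case True
      then show ?thesis using mono by simp
    next
      case False
      with Suc.IH have card_j: "j < card (S (k0 + j))"
        by blast
      then obtain r where "r \<in> S (k0 + j)"
        by (metis card.empty equals0I less_nat_zero_code)
      then have "R (k0 + j) r"
        unfolding S_def by blast
      with grow False obtain r' where r': "R (Suc (k0 + j)) r'" "\<not> R (k0 + j) r'"
        by blast
      have "S (k0 + j) \<subset> S (Suc (k0 + j))"
        using mono r' R_iff unfolding S_def by blast
      then have "card (S (k0 + j)) < card (S (k0 + Suc j))"
        using S_fin by (simp add: psubset_card_mono)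
      with card_j show ?thesis
        by simp
    qed
  qed
  have index_eq: "k0 + (nat m - 1) = k0 + nat m - 1"
    using \<open>m > 0\<close> by simp
  show ?thesis
  proof (cases "\<forall>a. R (k0 + nat m - 1) a")
    case False
    then have "card {0..<m} \<le> card (S (k0 + nat m - 1))"
      using count[of "nat m - 1"] \<open>m > 0\<close> unfolding index_eq by auto
    then have "S (k0 + nat m - 1) = {0..<m}"
      by (intro card_seteq) (auto simp: S_def)
    then show ?thesis
      using R_iff \<open>m > 0\<close> by simp
  qed blast
qed

lemma binomial_linear_cong: "[(1 + z) ^ n = 1 + int n * z] (mod z ^ 2)" for z :: int
proof (induction n)
  case (Suc n)
  have "[(1 + z) ^ Suc n = (1 + int n * z) * (1 + z)] (mod z ^ 2)"
    unfolding power_Suc2 by (rule cong_scalar_right[OF Suc.IH])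
  also have "(1 + int n * z) * (1 + z) = 1 + int (Suc n) * z + int n * z ^ 2"
    by (simp add: algebra_simps power2_eq_square)
  also have "[\<dots> = 1 + int (Suc n) * z] (mod z ^ 2)"
    by (simp add: cong_iff_dvd_diff)
  finally show ?case .
qed simp

lemma cube_raises_valuation:
  fixes c :: int
  assumes "m \<ge> 1"
  shows "\<exists>c'. (1 + 3 ^ m * c) ^ 3 = 1 + 3 ^ (m + 1) * c' \<and> [c' = c] (mod 3)"
proof -
  obtain i where m: "m = Suc i" using assms by (cases m) auto
  define c' where "c' = c + 3 ^ m * c ^ 2 + 3 * 3 ^ i * 3 ^ i * c ^ 3"
  have "(1 + 3 ^ m * c) ^ 3 = 1 + 3 ^ (m + 1) * c'"
    unfolding c'_def m by (simp add: algebra_simps power2_eq_square power3_eq_cube)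
  moreover have "[c' = c] (mod 3)"
    unfolding c'_def m cong_iff_dvd_diff by simp
  ultimately show ?thesis by blast
qed

lemma four_pow_valuation:
  assumes "T > 0"
  shows "\<exists>M d. (4::int) ^ T = 1 + 3 ^ M * d \<and> \<not> 3 dvd d \<and> 1 \<le> M \<and> M \<le> T"
  using assms
proof (induction T rule: less_induct)
  case (less T)
  show ?case
  proof (cases "3 dvd T")
    case False
    have "[(1 + 3) ^ T = 1 + int T * 3] (mod 3 ^ 2)"
      using binomial_linear_cong[of 3 T] by simp
    then obtain z where "(4::int) ^ T - (1 + int T * 3) = 3 ^ 2 * z"
      by (auto simp: cong_iff_dvd_diff)
    then have "(4::int) ^ T = 1 + 3 * (int T + 3 * z)"
      by simp
    moreover have "\<not> 3 dvd (int T + 3 * z)"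
      using False by presburger
    ultimately show ?thesis
      using less.prems by (intro exI[of _ 1] exI[of _ "int T + 3 * z"]) auto
  next
    case True
    then obtain T' where T: "T = 3 * T'" by blast
    with less.prems have "T' > 0" "T' < T" by auto
    with less.IH obtain M d where Md: "(4::int) ^ T' = 1 + 3 ^ M * d" "\<not> 3 dvd d" "1 \<le> M" "M \<le> T'"
      by blast
    obtain d' where d': "(1 + 3 ^ M * d) ^ 3 = 1 + 3 ^ (M + 1) * d'" "[d' = d] (mod 3)"
      using cube_raises_valuation[OF Md(3)] by blast
    have "(4::int) ^ T = (4 ^ T') ^ 3"
      unfolding T by (simp add: power_mult mult.commute)
    then have "(4::int) ^ T = 1 + 3 ^ (M + 1) * d'"
      using Md(1) d'(1) by simp
    moreover have "\<not> 3 dvd d'"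
      using d'(2) Md(2) by (simp add: cong_dvd_iff)
    ultimately show ?thesis
      using Md(4) T \<open>T' > 0\<close> by (intro exI[of _ "M + 1"] exI[of _ d']) auto
  qed
qed

lemma lift_to_next_power:
  fixes q d V Z :: int
  assumes q: "q = 1 + 3 ^ M * d" and "M \<ge> 1" and "\<not> 3 dvd d" and "\<not> 3 dvd V"
    and ZV: "[Z = V] (mod 3 ^ M)"
  shows "\<exists>t. [q ^ t * Z = V] (mod 3 ^ (M + 1))"
proof -
  obtain w where "Z - V = 3 ^ M * w"
    using ZV by (auto simp: cong_iff_dvd_diff)
  then have w: "Z = V + 3 ^ M * w"
    by simp
  have "\<not> 3 dvd d * V"
    using assms(3,4) by (simp add: prime_dvd_mult_iff[of "3::int"])
  then have "3 dvd w \<or> 3 dvd w + d * V \<or> 3 dvd w + 2 * (d * V)"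
    by presburger
  then obtain t :: nat where t: "3 dvd w + int t * (d * V)"
    by (metis of_nat_0 of_nat_1 of_nat_numeral mult_zero_left mult_1 add_0_right)
  have pow_dvd: "(3::int) ^ (M + 1) dvd 3 ^ M * 3 ^ M"
    unfolding power_add[symmetric] using \<open>M \<ge> 1\<close> by (intro le_imp_power_dvd) simp
  have "[q ^ t = 1 + int t * (3 ^ M * d)] (mod 3 ^ (M + 1))"
    using binomial_linear_cong[of "3 ^ M * d" t] q pow_dvd
    by (auto simp: power2_eq_square power_mult_distrib elim: cong_dvd_modulus)
  then have "[q ^ t * Z = (1 + int t * (3 ^ M * d)) * (V + 3 ^ M * w)] (mod 3 ^ (M + 1))"
    unfolding w by (rule cong_scalar_right)
  also have "(1 + int t * (3 ^ M * d)) * (V + 3 ^ M * w)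
      = V + 3 ^ M * (w + int t * (d * V)) + (3 ^ M * 3 ^ M) * (int t * d * w)"
    by (simp add: algebra_simps)
  also have "[\<dots> = V] (mod 3 ^ (M + 1))"
    using t pow_dvd by (simp add: cong_iff_dvd_diff mult_dvd_mono)
  finally show ?thesis ..
qed

(* 2 generates the units modulo 9. *)
lemma steer_mod_9:
  fixes c :: int
  assumes "\<not> 3 dvd c"
  shows "\<exists>s. [2 ^ s * c = 2] (mod 9)"
proof -
  have "c mod 9 = 1 \<or> c mod 9 = 2 \<or> c mod 9 = 4 \<or> c mod 9 = 5 \<or> c mod 9 = 7 \<or> c mod 9 = 8"
    using assms by presburger
  then have "\<exists>s \<in> {0, 1, 2, 3, 4, 5 :: nat}. (2 ^ s * (c mod 9)) mod 9 = 2"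
    by (elim disjE) auto
  then obtain s :: nat where "(2 ^ s * (c mod 9)) mod 9 = 2"
    by blast
  then have "[2 ^ s * c = 2] (mod 9)"
    by (simp add: cong_def mod_mult_right_eq)
  then show ?thesis ..
qed

lemma T1_of_2_mod_9:
  fixes e :: int
  assumes "[e = 2] (mod 9)"
  shows "\<not> 3 dvd (2 * e - 1) div 3"
proof -
  have "9 dvd e - 2"
    using assms by (simp add: cong_iff_dvd_diff)
  then show ?thesis
    by presburger
qed

lemma halve_mod_power_of_3: "\<exists>h. [2 * h = v] (mod 3 ^ n)" for v :: int
proof -
  have "coprime (2::int) (3 ^ n)"
    by simp
  then obtain i :: int where "[2 * i = 1] (mod 3 ^ n)"
    using cong_solve_coprime_int by blast
  then have "[2 * (i * v) = v] (mod 3 ^ n)"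
    using cong_scalar_right[of "2 * i" 1 _ v] by (simp add: mult.assoc)
  then show ?thesis ..
qed

lemma halve_preserves_unit:
  fixes h v :: int
  assumes "[2 * h = v] (mod 3 ^ n)" and "n \<ge> 1"
  shows "3 dvd h \<longleftrightarrow> 3 dvd v"
proof -
  have "[2 * h = v] (mod 3)"
    using assms by (auto intro: cong_dvd_modulus dvd_power)
  then have "3 dvd 2 * h \<longleftrightarrow> 3 dvd v"
    by (rule cong_dvd_iff)
  then show ?thesis
    by presburger
qed

lemma halve_cong_lower:
  fixes h v c :: int
  assumes "[2 * h = v] (mod 3 ^ M)" and "[v = 2 * c] (mod 3 ^ j)" and "j \<le> M"
  shows "[h = c] (mod 3 ^ j)"
proof -
  have "[2 * h = v] (mod 3 ^ j)"
    using assms(1) by (rule cong_dvd_modulus) (simp add: le_imp_power_dvd assms(3))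
  then have "[2 * h = 2 * c] (mod 3 ^ j)"
    using assms(2) by (rule cong_trans)
  then show ?thesis
    by (simp add: cong_mult_lcancel)
qed

lemma T1_preimage_cong:
  fixes u c :: int
  assumes "0 < j \<Longrightarrow> [c = 2] (mod 3)" and "[u = (2 * c - 1) div 3] (mod 3 ^ (j - 1))"
  shows "[3 * u + 1 = 2 * c] (mod 3 ^ j)"
proof (cases j)
  case (Suc i)
  then have "3 * ((2 * c - 1) div 3) + 1 = 2 * c"
    using assms(1) by (simp add: cong_def) presburger
  then have diff: "3 * u + 1 - 2 * c = 3 * (u - (2 * c - 1) div 3)"
    by (simp add: algebra_simps)
  have "3 ^ i dvd u - (2 * c - 1) div 3"
    using assms(2) Suc by (simp add: cong_iff_dvd_diff)
  then have "3 * 3 ^ i dvd 3 * (u - (2 * c - 1) div 3)"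
    by (rule mult_dvd_mono[OF dvd_refl])
  then show ?thesis
    unfolding cong_iff_dvd_diff diff Suc by simp
qed simp

lemma reachable_T1_cong:
  assumes X: "reachable x k X" and "[2 * X = 3 * u + 1] (mod 3 ^ (M + 1))"
  shows "\<exists>Y. reachable x (Suc k) Y \<and> 3 * Y + 1 = 2 * X \<and> [Y = u] (mod 3 ^ M)"
proof -
  obtain z where z: "2 * X - (3 * u + 1) = 3 ^ (M + 1) * z"
    using assms(2) by (auto simp: cong_iff_dvd_diff)
  define Y where "Y = u + 3 ^ M * z"
  have Y: "3 * Y + 1 = 2 * X"
    using z unfolding Y_def by (simp add: algebra_simps)
  moreover have "[Y = u] (mod 3 ^ M)"
    unfolding Y_def by (simp add: cong_iff_dvd_diff)
  ultimately show ?thesis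
    using reachable_T1[OF X Y] by blast
qed

locale three_adic_steering =
  fixes x :: nat and m :: int and M T :: nat and d :: int
  assumes x_pos: "x > 0" and x_unit: "\<not> 3 dvd int x"
    and m_gt_1: "m > 1" and m_coprime_6: "coprime m 6"
    and M_pos: "M \<ge> 1"
    and four_pow_T: "(4::int) ^ T = 1 + 3 ^ M * d" and d_unit: "\<not> 3 dvd d"
    and four_pow_T_mod: "[4 ^ T = 1] (mod m)"
begin

lemma m_coprime_3: "coprime m 3"
  using m_coprime_6 coprime_mult_right_iff[of m 2 3] by simp

definition attains :: "nat \<Rightarrow> int \<Rightarrow> nat \<Rightarrow> int \<Rightarrow> bool" where
  "attains k r j c \<longleftrightarrow> (\<forall>u. [u = c] (mod 3 ^ j) \<longrightarrow> \<not> 3 dvd u \<longrightarrow>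
      (\<exists>Y. reachable x k Y \<and> [Y = r] (mod m) \<and> [Y = u] (mod 3 ^ M)))"

(* Initially only x is available, so the constraint is as strong as possible (j = M). *)
lemma attains_start: "attains 0 (int x) M (int x)"
proof (unfold attains_def, intro allI impI)
  fix u assume "[u = int x] (mod 3 ^ M)"
  then show "\<exists>Y. reachable x 0 Y \<and> [Y = int x] (mod m) \<and> [Y = u] (mod 3 ^ M)"
    using reachable_start[OF x_pos] by (intro exI[of _ "int x"]) (simp add: cong_sym)
qed

lemma attains_mono: "attains k r j c \<Longrightarrow> k \<le> k' \<Longrightarrow> attains k' r j c"
  unfolding attains_def using reachable_mono by blast

lemma attains_cong: "attains k r j c \<Longrightarrow> [r = r'] (mod m) \<Longrightarrow> attains k r' j c"
  unfolding attains_def by (meson cong_trans)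

lemma attains_double:
  assumes A: "attains k r j c" and "j \<le> M"
  shows "attains k (2 * r) j (2 * c)"
proof (unfold attains_def, intro allI impI)
  fix u assume u: "[u = 2 * c] (mod 3 ^ j)" "\<not> 3 dvd u"
  obtain h where h: "[2 * h = u] (mod 3 ^ M)"
    using halve_mod_power_of_3 by blast
  have "[h = c] (mod 3 ^ j)" and "\<not> 3 dvd h"
    using halve_cong_lower[OF h u(1) \<open>j \<le> M\<close>] halve_preserves_unit[OF h M_pos] u(2) by auto
  then obtain Y where Y: "reachable x k Y" "[Y = r] (mod m)" "[Y = h] (mod 3 ^ M)"
    using A unfolding attains_def by blast
  have "reachable x k (2 * Y)"
    using reachable_double[OF Y(1), of 1] by simp
  moreover have "[2 * Y = 2 * r] (mod m)"
    using Y(2) by (rule cong_scalar_left)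
  moreover have "[2 * Y = u] (mod 3 ^ M)"
    using cong_scalar_left[OF Y(3), of 2] h by (rule cong_trans)
  ultimately show "\<exists>Y. reachable x k Y \<and> [Y = 2 * r] (mod m) \<and> [Y = u] (mod 3 ^ M)"
    by blast
qed

lemma attains_double_pow: "attains k r j c \<Longrightarrow> j \<le> M \<Longrightarrow> attains k (2 ^ s * r) j (2 ^ s * c)"
  by (induction s) (simp_all add: mult.assoc attains_double)

(* One application of T1^{-1} (after adjusting by a power of 4^T, which is invisible modulo m
   and modulo 3^M) relaxes the 3-adic constraint by one power of 3. *)
lemma attains_step:
  assumes A: "attains k r j c" and "j \<le> M" and c2: "0 < j \<Longrightarrow> [c = 2] (mod 3)"
    and rr: "[3 * r' + 1 = 2 * r] (mod m)"
  shows "attains (Suc k) r' (j - 1) ((2 * c - 1) div 3)"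
proof (unfold attains_def, intro allI impI)
  fix u assume u: "[u = (2 * c - 1) div 3] (mod 3 ^ (j - 1))" "\<not> 3 dvd u"
  obtain h where h: "[2 * h = 3 * u + 1] (mod 3 ^ M)"
    using halve_mod_power_of_3 by blast
  have V_unit: "\<not> 3 dvd (3 * u + 1)"
    by presburger
  then have "[h = c] (mod 3 ^ j)" and "\<not> 3 dvd h"
    using halve_cong_lower[OF h T1_preimage_cong[OF c2 u(1)] \<open>j \<le> M\<close>]
      halve_preserves_unit[OF h M_pos] by auto
  then obtain Y where Y: "reachable x k Y" "[Y = r] (mod m)" "[Y = h] (mod 3 ^ M)"
    using A unfolding attains_def by blast
  have "[2 * Y = 3 * u + 1] (mod 3 ^ M)"
    using cong_scalar_left[OF Y(3), of 2] h by (rule cong_trans)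
  then obtain t where t: "[(4 ^ T) ^ t * (2 * Y) = 3 * u + 1] (mod 3 ^ (M + 1))"
    using lift_to_next_power[OF four_pow_T M_pos d_unit V_unit] by blast
  define X where "X = 2 ^ (2 * T * t) * Y"
  have X4: "X = (4 ^ T) ^ t * Y"
    unfolding X_def by (simp add: power_mult)
  have "[2 * X = 3 * u + 1] (mod 3 ^ (M + 1))"
    using t by (simp add: X4 ac_simps)
  then obtain Y' where Y': "reachable x (Suc k) Y'" "3 * Y' + 1 = 2 * X" "[Y' = u] (mod 3 ^ M)"
    using reachable_T1_cong[OF reachable_double[OF Y(1)]] unfolding X_def by blast
  have "[X = 1 ^ t * r] (mod m)"
    unfolding X4 using cong_pow[OF four_pow_T_mod] Y(2) by (rule cong_mult)
  then have "[2 * X = 2 * r] (mod m)"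
    by (simp add: cong_scalar_left)
  then have "[3 * Y' + 1 = 3 * r' + 1] (mod m)"
    unfolding Y'(2) using cong_sym[OF rr] by (rule cong_trans)
  then have "[Y' = r'] (mod m)"
    using m_coprime_3 by (simp add: cong_add_rcancel cong_mult_lcancel coprime_commute)
  then show "\<exists>Y. reachable x (Suc k) Y \<and> [Y = r'] (mod m) \<and> [Y = u] (mod 3 ^ M)"
    using Y' by blast
qed

(* Phase 1: after M steps the 3-adic constraint has disappeared. *)
lemma attains_phase:
  assumes "i \<le> M"
  shows "\<exists>r c. \<not> 3 dvd c \<and> attains i r (M - i) c"
  using assms
proof (induction i)
  case 0
  show ?case
    using attains_start x_unit by (intro exI[of _ "int x"]) simp
next
  case (Suc i)
  then obtain r c where rc: "\<not> 3 dvd c" "attains i r (M - i) c"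
    by auto
  obtain s where s: "[2 ^ s * c = 2] (mod 9)"
    using steer_mod_9[OF rc(1)] by blast
  obtain r' where r': "[3 * r' + 1 = 2 * (2 ^ s * r)] (mod m)"
    using T1_residue_exists[OF m_coprime_3] by blast
  have "[2 ^ s * c = 2] (mod 3)"
    using s by (rule cong_dvd_modulus) simp
  then have "attains (Suc i) r' (M - Suc i) ((2 * (2 ^ s * c) - 1) div 3)"
    using attains_step[OF attains_double_pow[OF rc(2)] _ _ r'] by simp
  moreover have "\<not> 3 dvd (2 * (2 ^ s * c) - 1) div 3"
    using s by (rule T1_of_2_mod_9)
  ultimately show ?case
    by blast
qed

definition covers :: "nat \<Rightarrow> int \<Rightarrow> bool" where
  "covers k r \<longleftrightarrow> attains k r 0 0"

lemma attains_0_eq_covers: "attains k r 0 c \<longleftrightarrow> covers k r"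
  unfolding covers_def attains_def by simp

(* Either the covered residues are closed under T1 (and then they are everything), or the next
   step covers a new residue. *)
lemma covers_grows:
  assumes "covers k r0"
  shows "(\<forall>a. covers k a) \<or> (\<exists>r'. covers (Suc k) r' \<and> \<not> covers k r')"
proof (cases "\<forall>r r'. covers k r \<longrightarrow> [3 * r' + 1 = 2 * r] (mod m) \<longrightarrow> covers k r'")
  case True
  interpret closed_residue_set m "covers k"
  proof
    show "covers k r'" if "covers k r" "[r = r'] (mod m)" for r r'
      using that attains_cong unfolding covers_def by blast
    show "covers k (2 * r)" if "covers k r" for r
      using that attains_double[of k r 0 0] unfolding covers_def by simp
  qed (use m_gt_1 m_coprime_6 True in auto)
  show ?thesis
    using R_everything[OF assms] by blast
next
  case False
  then obtain r r' where "covers k r" "[3 * r' + 1 = 2 * r] (mod m)" "\<not> covers k r'"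
    by blast
  then have "covers (Suc k) r'" and "\<not> covers k r'"
    using attains_step[of k r 0 0 r'] by (simp_all add: attains_0_eq_covers)
  then show ?thesis
    by blast
qed

lemma covers_everything: "covers (M + nat m - 1) a"
proof -
  obtain r c where "attains M r 0 c"
    using attains_phase[of M] by auto
  then have start: "covers M r"
    by (simp add: attains_0_eq_covers)
  show ?thesis
  proof (rule saturation[of m covers, OF _ _ _ _ start])
    show "m > 0"
      using m_gt_1 by simp
    show "covers k r'" if "covers k r" "[r = r'] (mod m)" for k r r'
      using that attains_cong unfolding covers_def by blast
    show "covers (Suc k) r" if "covers k r" for k r
      using that attains_mono[of k r 0 0 "Suc k"] unfolding covers_def by simp
    show "(\<forall>a. covers k a) \<or> (\<exists>r'. covers (Suc k) r' \<and> \<not> covers k r')" if "covers k r" for k r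
      using covers_grows[OF that] .
  qed
qed

theorem reach_any_residue: "\<exists>Y. reachable x (M + nat m - 1) Y \<and> [Y = a] (mod m) \<and> \<not> 3 dvd Y"
proof -
  obtain Y where Y: "reachable x (M + nat m - 1) Y" "[Y = a] (mod m)" "[Y = 1] (mod 3 ^ M)"
    using covers_everything[of a, unfolded covers_def attains_def, rule_format, of 1] by auto
  have "[Y = 1] (mod 3)"
    using Y(3) M_pos by (auto intro: cong_dvd_modulus dvd_power)
  then have "\<not> 3 dvd Y"
    by (simp add: cong_dvd_iff)
  then show ?thesis
    using Y by blast
qed

end

(* For b > 1 the element 3/2 is not 1 modulo b, so its order is at least 2. *)
lemma ord_three_halves_ge_2:
  assumes "b > 1" and "coprime b 6"
  shows "ord_three_halves b \<ge> 2"
proof -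
  define i where "i = modular_inverse (int b) 2"
  define Q where "Q = 3 * i"
  have cop: "coprime (int b) 2" "coprime (int b) 3"
    using assms(2) coprime_mult_right_iff[of b 2 3] by (simp_all add: coprime_int_iff[symmetric])
  have i: "[2 * i = 1] (mod int b)"
    unfolding i_def using cop(1) by (intro cong_modular_inverse1) (simp add: coprime_commute)
  have "coprime (int b) i"
    unfolding i_def using coprime_modular_inverse[of 2 "int b"] cop(1) by (simp add: coprime_commute)
  then have cop_Q: "coprime (int b) Q"
    unfolding Q_def using cop(2) by simp
  have "[Q ^ totient b = 1] (mod int b)"
    using residues.euler_theorem[of "int b" Q] assms(1) cop_Q by (simp add: residues_def coprime_commute)
  moreover have "totient b > 0"
    using assms(1) by simp
  ultimately have "\<exists>k. 0 < k \<and> [Q ^ k = 1] (mod int b)"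
    by blast
  then have ord: "0 < ord (int b) Q" "[Q ^ ord (int b) Q = 1] (mod int b)"
    using LeastI_ex[of "\<lambda>k. 0 < k \<and> [Q ^ k = 1] (mod int b)"] cop_Q by (simp_all add: ord_def)
  have "ord (int b) Q \<noteq> 1"
  proof
    assume "ord (int b) Q = 1"
    then have "[Q = 1] (mod int b)"
      using ord(2) by simp
    then have "[2 * Q = 2 * 1] (mod int b)"
      by (rule cong_scalar_left)
    moreover have "[2 * Q = 3 * 1] (mod int b)"
      unfolding Q_def using cong_scalar_left[OF i, of 3] by (simp add: ac_simps)
    ultimately have "[3 = 2] (mod int b)"
      by (metis cong_sym cong_trans mult_1_right)
    then show False
      using assms(1) by (simp add: cong_iff_dvd_diff)
  qed
  with ord(1) show ?thesis
    unfolding ord_three_halves_def Q_def i_def by simp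
qed

(* The main construction for the modulus b > 1, with T = totient b; the length bound M + b - 1 is
   at most 2(b - 1) since M <= T < b. *)
lemma reachable_residue_gt_1:
  assumes "b > 1" and "coprime b 6" and "x > 0" and "\<not> 3 dvd int x"
  shows "\<exists>Y. reachable x (2 * (b - 1)) Y \<and> [Y = int a] (mod int b) \<and> \<not> 3 dvd Y"
proof -
  define T where "T = totient b"
  have T: "0 < T" "T < b"
    unfolding T_def using assms(1) totient_less by auto
  have "coprime 2 b"
    using assms(2) coprime_mult_right_iff[of b 2 3] by (simp add: coprime_commute)
  then have "coprime (2 ^ 2) b"
    by (simp only: coprime_power_left_iff) simp
  then have "[(2 ^ 2) ^ T = 1] (mod b)"
    unfolding T_def by (rule euler_theorem)
  then have T_mod: "[4 ^ T = 1] (mod int b)"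
    using cong_int_iff[of "(2 ^ 2) ^ T" 1 b] by simp
  obtain M d where Md: "(4::int) ^ T = 1 + 3 ^ M * d" "\<not> 3 dvd d" "1 \<le> M" "M \<le> T"
    using four_pow_valuation[OF T(1)] by blast
  have "coprime (int b) 6"
    using assms(2) by (metis coprime_int_iff of_nat_numeral)
  then interpret three_adic_steering x "int b" M T d
    using assms(1,3,4) Md T_mod by unfold_locales auto
  obtain Y where "reachable x (M + b - 1) Y" "[Y = int a] (mod int b)" "\<not> 3 dvd Y"
    using reach_any_residue by auto
  moreover have "M + b - 1 \<le> 2 * (b - 1)"
    using Md(4) T by simp
  ultimately show ?thesis
    using reachable_mono by blast
qed

(* Including the trivial modulus b = 1, where x itself will do. *)
lemma reachable_residue:
  assumes "b > 0" and "coprime b 6" and "x > 0" and "\<not> 3 dvd x"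
  shows "\<exists>Y. reachable x (2 * (b - 1)) Y \<and> [Y = int a] (mod int b) \<and> \<not> 3 dvd Y"
proof -
  have x_unit: "\<not> 3 dvd int x"
    using assms(4) by presburger
  show ?thesis
  proof (cases "b = 1")
    case True
    then show ?thesis
      using reachable_start[OF assms(3)] x_unit by (intro exI[of _ "int x"]) auto
  next
    case False
    then show ?thesis
      using reachable_residue_gt_1[of b x a] assms(1-3) x_unit by simp
  qed
qed

theorem mainTheorem5:
  fixes b a x :: nat
  assumes "b > 0" and "coprime b 6" and "a < b"
    and "x > 0" and "coprime x 3"
  shows "\<exists>s \<in> admissible x. \<exists>n::nat. vs s (of_nat x) = of_nat n \<and>
            [n = a] (mod b) \<and> \<not> [n = 0] (mod 3) \<and>
            len s \<le> (b - 1) * ord_three_halves b"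
proof -
  have "\<not> 3 dvd x"
    using assms(5) coprime_common_divisor[of x 3 3] by auto
  then obtain Y where Y: "reachable x (2 * (b - 1)) Y" "[Y = int a] (mod int b)" "\<not> 3 dvd Y"
    using reachable_residue assms by blast
  then have "Y > 0"
    unfolding reachable_def by blast
  then obtain n where n: "Y = int n"
    using zero_less_imp_eq_int by blast
  obtain s where s: "s \<in> admissible x" "vs s (of_nat x) = of_nat n" "len s \<le> 2 * (b - 1)"
    using admissible_of_reachable Y(1) n by blast
  have "2 * (b - 1) \<le> (b - 1) * ord_three_halves b"
    using ord_three_halves_ge_2[of b] assms(1,2) by (cases "b = 1") auto
  with s(3) have "len s \<le> (b - 1) * ord_three_halves b"
    by (rule order_trans)
  moreover have "[n = a] (mod b)"
    using Y(2) n by (simp add: cong_int_iff)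
  moreover have "\<not> [n = 0] (mod 3)"
    using Y(3) n by (simp add: cong_0_iff) presburger
  ultimately show ?thesis
    using s(1,2) by blast
qed

end
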